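(* Let $U$ be a set of variables, $k,\ell\ge1$, $\vec r=(r_1,\dots,r_k)\in\mathbb{Z}_{\ge1}^k$, $\vec s=(s_1,\dots,s_\ell)\in\mathbb{Z}_{\ge1}^\ell$, $\vec u\in U^k$, $\vec v\in U^\ell$. Then in the field $\mathbb{Z}(U)$ of rational functions, $$f\begin{pmatrix}\vec r\\ \vec u\end{pmatrix}\, f\begin{pmatrix}\vec s\\ \vec v\end{pmatrix}=\sum_{(\varphi,\psi)\in I_{k,\ell}}\ \sum_{\substack{\vec t\in\mathbb{Z}_{\ge1}^{k+\ell}\\ |\vec t|=|\vec r|+|\vec s|}}\Big(\prod_{i=1}^{k+\ell}c^{\vec t,(\varphi,\psi)}_{\vec r,\vec s}(i)\Big)\, f\begin{pmatrix}\vec t\\ \vec u\,ш_{(\varphi,\psi)}\vec v\end{pmatrix}.$$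
   Context: For positive integers $s_1,\dots,s_k$ and variables $u_1,\dots,u_k$, $f\begin{pmatrix} s_1,\dots,s_k\\ u_1,\dots,u_k\end{pmatrix}=\frac{1}{(u_1+\cdots+u_k)^{s_1}(u_2+\cdots+u_k)^{s_2}\cdots u_k^{s_k}}$. For $\vec t\in\mathbb{Z}^n$, $|\vec t|=t_1+\cdots+t_n$. $I_{k,\ell}$ is the set of pairs $(\varphi,\psi)$ of order-preserving injective maps $\varphi:\{1,\dots,k\}\to\{1,\dots,k+\ell\}$, $\psi:\{1,\dots,\ell\}\to\{1,\dots,k+\ell\}$ with $\mathrm{im}\varphi\cup\mathrm{im}\psi=\{1,\dots,k+\ell\}$ (so the images are disjoint). The vector $\vec u\,ш_{(\varphi,\psi)}\vec v\in U^{k+\ell}$ has $i$-th component $u_j$ if $i=\varphi(j)$ and $v_j$ if $i=\psi(j)$. Set $h_i=r_j$ if $i=\varphi(j)$ and $h_i=s_j$ if $i=\psi(j)$. Put $R_i=r_1+\cdots+r_i$, $S_i=s_1+\cdots+s_i$, $T_i=t_1+\cdots+t_i$, with $R_0=S_0=0$. Define $$c^{\vec t,(\varphi,\psi)}_{\vec r,\vec s}(i)=\begin{cases}\binom{t_i-1}{h_i-1}& \text{if } i=1,\text{ or } i-1,i\in\mathrm{im}\varphi,\text{ or } i-1,i\in\mathrm{im}\psi,\\[2pt] \binom{t_i-1}{T_i-R_{|\varphi^{-1}(\{1,\dots,i\})|}-S_{|\psi^{-1}(\{1,\dots,i\})|}} & \text{otherwise,}\end{cases}$$ where $\binom{n}{m}=0$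 if $m<0$ or $m>n$. *)

theory Defs
  imports Main "HOL-Library.FuncSet"
begin

text \<open>All vectors are 1-based: a vector of length k is a function on {1..k}.\<close>

definition mzf :: "nat \<Rightarrow> (nat \<Rightarrow> nat) \<Rightarrow> (nat \<Rightarrow> 'a::field) \<Rightarrow> 'a" where
  "mzf k s u = 1 / (\<Prod>i=1..k. (\<Sum>j=i..k. u j) ^ (s i))"

definition shuffle_pairs :: "nat \<Rightarrow> nat \<Rightarrow> ((nat \<Rightarrow> nat) \<times> (nat \<Rightarrow> nat)) set" where
  "shuffle_pairs k l = {(\<phi>, \<psi>).
      \<phi> \<in> {1..k} \<rightarrow>\<^sub>E {1..k+l} \<and> \<psi> \<in> {1..l} \<rightarrow>\<^sub>E {1..k+l} \<and>
      strict_mono_on {1..k} \<phi> \<and> strict_mono_on {1..l} \<psi> \<and>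
      \<phi> ` {1..k} \<union> \<psi> ` {1..l} = {1..k+l}}"

definition shuffle_vec :: "nat \<Rightarrow> nat \<Rightarrow> (nat \<Rightarrow> nat) \<Rightarrow> (nat \<Rightarrow> nat) \<Rightarrow> (nat \<Rightarrow> 'b) \<Rightarrow> (nat \<Rightarrow> 'b) \<Rightarrow> nat \<Rightarrow> 'b" where
  "shuffle_vec k l \<phi> \<psi> u v i =
     (if i \<in> \<phi> ` {1..k} then u (THE j. j \<in> {1..k} \<and> \<phi> j = i)
      else v (THE j. j \<in> {1..l} \<and> \<psi> j = i))"

definition ibinom :: "nat \<Rightarrow> int \<Rightarrow> nat" where
  "ibinom n m = (if m < 0 then 0 else n choose (nat m))"

definition ccoef :: "nat \<Rightarrow> nat \<Rightarrow> (nat \<Rightarrow> nat) \<Rightarrow> (nat \<Rightarrow> nat) \<Rightarrow> (nat \<Rightarrow> nat)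
    \<Rightarrow> (nat \<Rightarrow> nat) \<Rightarrow> (nat \<Rightarrow> nat) \<Rightarrow> nat \<Rightarrow> nat" where
  "ccoef k l r s t \<phi> \<psi> i =
     (let h = shuffle_vec k l \<phi> \<psi> r s;
          A = \<phi> ` {1..k}; B = \<psi> ` {1..l};
          Ti = (\<Sum>j=1..i. t j);
          a = card {j \<in> {1..k}. \<phi> j \<in> {1..i}};
          b = card {j \<in> {1..l}. \<psi> j \<in> {1..i}};
          Ra = (\<Sum>j=1..a. r j);
          Sb = (\<Sum>j=1..b. s j)
      in if i = 1 \<or> (i - 1 \<in> A \<and> i \<in> A) \<or> (i - 1 \<in> B \<and> i \<in> B)
         then (t i - 1) choose (h i - 1)
         else ibinom (t i - 1) (int Ti - int Ra - int Sb))"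

end

theory Submission
  imports Defs
begin

(*
  Both sides are expanded according to the first position of the shuffle. With X and Y the full
  sums of u and v, a = r_1 and b = s_1, the partial fraction identity

    1 / (X^a Y^b) = sum_p C(p-1, a-1) / ((X+Y)^p Y^(a+b-p)) + sum_p C(p-1, b-1) / ((X+Y)^p X^(a+b-p))

  splits the product: the p-th term of the first sum collects the shuffles whose first position lies
  in the image of phi and carries weight t_1 = p. Its factor (X+Y)^-p is the first factor of
  f(t; u sh v), and the leftover power Y^(a+b-p) is absorbed by lowering the first exponent of
  f(s; v) by p - r_1; the second sum is the symmetric case. The induction on k + l is therefore run
  for products in which s_1 is lowered by an arbitrary deficit d, with correspondingly generalised
  coefficients.
*)

lemma sum_atLeast1_atMost_Suc: "(\<Sum>i=1..Suc m. g i) = g 1 + (\<Sum>i=1..m. g (Suc i))"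
  by (simp add: sum.atLeast_Suc_atMost sum.shift_bounds_cl_Suc_ivl[symmetric] add.assoc)

lemma prod_atLeast1_atMost_Suc: "(\<Prod>i=1..Suc m. g i) = g 1 * (\<Prod>i=1..m. g (Suc i))"
  by (simp add: prod.atLeast_Suc_atMost prod.shift_bounds_cl_Suc_ivl[symmetric] mult.assoc)

lemma int_sum_atLeast1_atMost_Suc: "int (\<Sum>i=1..Suc k. r i) = int (r 1) + int (\<Sum>i=1..k. r (Suc i))"
  by (simp only: sum_atLeast1_atMost_Suc of_nat_add)

lemma atLeast1_atMost_Suc_eq_insert: "{1..Suc n} = insert 1 (Suc ` {1..n})"
  by (auto simp: image_Suc_atLeastAtMost)

section \<open>Shuffle pairs\<close>

type_synonym shuffle_pair = "(nat \<Rightarrow> nat) \<times> (nat \<Rightarrow> nat)"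

lemma shuffle_pairsD:
  assumes "(\<phi>, \<psi>) \<in> shuffle_pairs k l"
  shows "\<phi> \<in> {1..k} \<rightarrow>\<^sub>E {1..k+l}" "\<psi> \<in> {1..l} \<rightarrow>\<^sub>E {1..k+l}"
    "strict_mono_on {1..k} \<phi>" "strict_mono_on {1..l} \<psi>"
    "\<phi> ` {1..k} \<union> \<psi> ` {1..l} = {1..k+l}"
  using assms by (auto simp: shuffle_pairs_def)

lemma shuffle_pairs_swap: "(\<phi>, \<psi>) \<in> shuffle_pairs k l \<longleftrightarrow> (\<psi>, \<phi>) \<in> shuffle_pairs l k"
  unfolding shuffle_pairs_def by (auto simp: add.commute Un_commute)

lemma finite_shuffle_pairs: "finite (shuffle_pairs k l)"
proof (rule finite_subset)
  show "shuffle_pairs k l \<subseteq> ({1..k} \<rightarrow>\<^sub>E {1..k+l}) \<times> ({1..l} \<rightarrow>\<^sub>E {1..k+l})"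
    by (auto simp: shuffle_pairs_def)
qed (auto intro: finite_PiE)

lemma shuffle_pairs_inj:
  assumes "(\<phi>, \<psi>) \<in> shuffle_pairs k l"
  shows "inj_on \<phi> {1..k}" "inj_on \<psi> {1..l}"
  using shuffle_pairsD[OF assms] strict_mono_on_imp_inj_on by auto

lemma shuffle_pairs_disjoint:
  assumes "(\<phi>, \<psi>) \<in> shuffle_pairs k l"
  shows "\<phi> ` {1..k} \<inter> \<psi> ` {1..l} = {}"
proof -
  have "card (\<phi> ` {1..k} \<union> \<psi> ` {1..l}) + card (\<phi> ` {1..k} \<inter> \<psi> ` {1..l}) = k + l"
    using card_Un_Int[of "\<phi> ` {1..k}" "\<psi> ` {1..l}"] shuffle_pairs_inj[OF assms]
    by (simp add: card_image)
  then show ?thesis using shuffle_pairsD(5)[OF assms] by simp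
qed

lemma shuffle_pairs_snd_image_iff:
  assumes "(\<phi>, \<psi>) \<in> shuffle_pairs k l" "i \<in> {1..k+l}"
  shows "i \<in> \<psi> ` {1..l} \<longleftrightarrow> i \<notin> \<phi> ` {1..k}"
  using shuffle_pairsD(5)[OF assms(1)] shuffle_pairs_disjoint[OF assms(1)] assms(2) by blast

lemma shuffle_pairs_fst_1:
  assumes "(\<phi>, \<psi>) \<in> shuffle_pairs k l" "1 \<in> \<phi> ` {1..k}"
  shows "\<phi> 1 = 1"
proof -
  obtain j where j: "j \<in> {1..k}" "\<phi> j = 1" using assms(2) by auto
  have "\<phi> 1 \<ge> 1" using PiE_mem[OF shuffle_pairsD(1)[OF assms(1)], of 1] j(1) by auto
  moreover have "\<phi> 1 \<le> \<phi> j"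
    using j(1) strict_mono_on_leD[OF shuffle_pairsD(3)[OF assms(1)], of 1 j] by auto
  ultimately show ?thesis using j(2) by simp
qed

lemma shuffle_vec_fst:
  assumes "(\<phi>, \<psi>) \<in> shuffle_pairs k l" "j \<in> {1..k}"
  shows "shuffle_vec k l \<phi> \<psi> x y (\<phi> j) = x j"
proof -
  have "(THE j'. j' \<in> {1..k} \<and> \<phi> j' = \<phi> j) = j"
    using assms(2) inj_onD[OF shuffle_pairs_inj(1)[OF assms(1)]] by blast
  then show ?thesis using assms(2) by (simp add: shuffle_vec_def)
qed

lemma shuffle_vec_snd:
  assumes "(\<phi>, \<psi>) \<in> shuffle_pairs k l" "j \<in> {1..l}"
  shows "shuffle_vec k l \<phi> \<psi> x y (\<psi> j) = y j"
proof -
  have "(THE j'. j' \<in> {1..l} \<and> \<psi> j' = \<psi> j) = j"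
    using assms(2) inj_onD[OF shuffle_pairs_inj(2)[OF assms(1)]] by blast
  moreover have "\<psi> j \<notin> \<phi> ` {1..k}" using assms shuffle_pairs_disjoint by blast
  ultimately show ?thesis by (simp add: shuffle_vec_def)
qed

lemma shuffle_vec_swap:
  assumes "(\<phi>, \<psi>) \<in> shuffle_pairs k l" "i \<in> {1..k+l}"
  shows "shuffle_vec l k \<psi> \<phi> y x i = shuffle_vec k l \<phi> \<psi> x y i"
proof -
  have swapped: "(\<psi>, \<phi>) \<in> shuffle_pairs l k" using assms(1) shuffle_pairs_swap by blast
  have "i \<in> \<phi> ` {1..k} \<union> \<psi> ` {1..l}" using shuffle_pairsD(5)[OF assms(1)] assms(2) by simp
  then show ?thesis
  proof
    assume "i \<in> \<phi> ` {1..k}"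
    then obtain j where "j \<in> {1..k}" "i = \<phi> j" by auto
    then show ?thesis using shuffle_vec_fst[OF assms(1)] shuffle_vec_snd[OF swapped] by metis
  next
    assume "i \<in> \<psi> ` {1..l}"
    then obtain j where "j \<in> {1..l}" "i = \<psi> j" by auto
    then show ?thesis using shuffle_vec_snd[OF assms(1)] shuffle_vec_fst[OF swapped] by metis
  qed
qed

lemma sum_shuffle_vec:
  assumes "(\<phi>, \<psi>) \<in> shuffle_pairs k l"
  shows "(\<Sum>j=1..k+l. shuffle_vec k l \<phi> \<psi> x y j) = (\<Sum>j=1..k. x j) + (\<Sum>j=1..l. y j)"
proof -
  let ?w = "shuffle_vec k l \<phi> \<psi> x y"
  have "(\<Sum>j=1..k+l. ?w j) = (\<Sum>j\<in>\<phi> ` {1..k}. ?w j) + (\<Sum>j\<in>\<psi> ` {1..l}. ?w j)"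
    using shuffle_pairsD(5)[OF assms] shuffle_pairs_disjoint[OF assms]
    by (metis finite_Un finite_atLeastAtMost sum.union_disjoint)
  also have "\<dots> = (\<Sum>j=1..k. ?w (\<phi> j)) + (\<Sum>j=1..l. ?w (\<psi> j))"
    using shuffle_pairs_inj[OF assms] by (simp add: sum.reindex)
  also have "(\<Sum>j=1..k. ?w (\<phi> j)) = (\<Sum>j=1..k. x j)"
    by (rule sum.cong[OF refl]) (rule shuffle_vec_fst[OF assms])
  also have "(\<Sum>j=1..l. ?w (\<psi> j)) = (\<Sum>j=1..l. y j)"
    by (rule sum.cong[OF refl]) (rule shuffle_vec_snd[OF assms])
  finally show ?thesis .
qed

section \<open>Compositions\<close>

definition compositions :: "nat \<Rightarrow> nat \<Rightarrow> (nat \<Rightarrow> nat) set" where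
  "compositions n N = {t \<in> {1..n} \<rightarrow>\<^sub>E UNIV. (\<forall>i\<in>{1..n}. t i \<ge> 1) \<and> (\<Sum>i=1..n. t i) = N}"

lemma finite_compositions: "finite (compositions n N)"
proof (rule finite_subset)
  show "compositions n N \<subseteq> {1..n} \<rightarrow>\<^sub>E {0..N}"
  proof
    fix t assume t: "t \<in> compositions n N"
    have "t i \<le> N" if "i \<in> {1..n}" for i
      using member_le_sum[of i "{1..n}" t] that t by (auto simp: compositions_def)
    then show "t \<in> {1..n} \<rightarrow>\<^sub>E {0..N}" using t by (auto simp: compositions_def PiE_def)
  qed
qed (auto intro: finite_PiE)

lemma compositions_0: "compositions 0 N = (if N = 0 then {\<lambda>_. undefined} else {})"
  by (auto simp: compositions_def)

definition comp_cons :: "nat \<Rightarrow> nat \<Rightarrow> (nat \<Rightarrow> nat) \<Rightarrow> nat \<Rightarrow> nat" where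
  "comp_cons m t1 t = (\<lambda>i. if i \<in> {1..Suc m} then (if i = 1 then t1 else t (i - 1)) else undefined)"

definition comp_tail :: "nat \<Rightarrow> (nat \<Rightarrow> nat) \<Rightarrow> nat \<Rightarrow> nat" where
  "comp_tail m t = (\<lambda>i. if i \<in> {1..m} then t (Suc i) else undefined)"

lemma comp_cons_1 [simp]: "comp_cons m t1 t 1 = t1"
  by (simp add: comp_cons_def)

lemma comp_cons_Suc [simp]: "i \<in> {1..m} \<Longrightarrow> comp_cons m t1 t (Suc i) = t i"
  by (simp add: comp_cons_def)

lemma sum_comp_cons: "i \<le> m \<Longrightarrow> (\<Sum>j=1..Suc i. comp_cons m t1 t j) = t1 + (\<Sum>j=1..i. t j)"
  by (subst sum_atLeast1_atMost_Suc) (auto simp: comp_cons_def intro!: sum.cong)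

lemma sum_compositions_Suc:
  "(\<Sum>t\<in>compositions (Suc m) N. g t) = (\<Sum>t1=1..N. \<Sum>t\<in>compositions m (N - t1). g (comp_cons m t1 t))"
proof -
  have "(\<Sum>t1=1..N. \<Sum>t\<in>compositions m (N - t1). g (comp_cons m t1 t))
      = (\<Sum>p\<in>Sigma {1..N} (\<lambda>t1. compositions m (N - t1)). g (comp_cons m (fst p) (snd p)))"
    by (subst sum.Sigma) (auto simp: finite_compositions split_beta)
  also have "\<dots> = (\<Sum>t\<in>compositions (Suc m) N. g t)"
  proof (rule sum.reindex_bij_witness[where i = "\<lambda>t. (t 1, comp_tail m t)"
        and j = "\<lambda>p. comp_cons m (fst p) (snd p)"])
    fix p assume "p \<in> Sigma {1..N} (\<lambda>t1. compositions m (N - t1))"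
    then obtain t1 t where p: "p = (t1, t)" "t1 \<in> {1..N}" "t \<in> compositions m (N - t1)"
      by auto
    then show "(comp_cons m (fst p) (snd p) 1, comp_tail m (comp_cons m (fst p) (snd p))) = p"
      by (auto simp: comp_tail_def compositions_def PiE_def extensional_def fun_eq_iff comp_cons_def)
    have "(\<Sum>i=1..Suc m. comp_cons m t1 t i) = t1 + (\<Sum>i=1..m. t i)"
      by (rule sum_comp_cons) simp
    moreover have "comp_cons m t1 t i \<ge> 1" if "i \<in> {1..Suc m}" for i
      using p that by (cases i) (auto simp: comp_cons_def compositions_def)
    ultimately show "comp_cons m (fst p) (snd p) \<in> compositions (Suc m) N"
      using p by (auto simp: compositions_def comp_cons_def)
  next
    fix t assume t: "t \<in> compositions (Suc m) N"
    show "comp_cons m (fst (t 1, comp_tail m t)) (snd (t 1, comp_tail m t)) = t"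
    proof
      fix i show "comp_cons m (fst (t 1, comp_tail m t)) (snd (t 1, comp_tail m t)) i = t i"
        using t by (cases i) (auto simp: comp_cons_def comp_tail_def compositions_def PiE_def extensional_def)
    qed
    have "(\<Sum>i=1..Suc m. t i) = t 1 + (\<Sum>i=1..m. comp_tail m t i)"
      by (subst sum_atLeast1_atMost_Suc) (simp add: comp_tail_def)
    then show "(t 1, comp_tail m t) \<in> Sigma {1..N} (\<lambda>t1. compositions m (N - t1))"
      using t by (auto simp: compositions_def comp_tail_def PiE_def extensional_def)
  qed simp
  finally show ?thesis ..
qed

lemma mzf_0: "mzf 0 t w = 1"
  by (simp add: mzf_def)

lemma mzf_cong: "(\<And>i. i \<in> {1..n} \<Longrightarrow> w i = w' i) \<Longrightarrow> mzf n t w = mzf n t w'"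
  unfolding mzf_def by (intro arg_cong[where f = "\<lambda>x. 1 / x"] prod.cong refl arg_cong2[where f = "(^)"] sum.cong) auto

lemma mzf_Suc:
  assumes "\<And>i. i \<in> {1..m} \<Longrightarrow> t (Suc i) = t' i" "\<And>i. i \<in> {1..m} \<Longrightarrow> w (Suc i) = w' i"
  shows "mzf (Suc m) t w = mzf m t' w' / (\<Sum>j=1..Suc m. w j) ^ t 1"
proof -
  have "(\<Sum>j=Suc i..Suc m. w j) ^ t (Suc i) = (\<Sum>j=i..m. w' j) ^ t' i" if "i \<in> {1..m}" for i
    unfolding sum.shift_bounds_cl_Suc_ivl using assms that by (auto intro!: sum.cong)
  then have "(\<Prod>i=1..m. (\<Sum>j=Suc i..Suc m. w j) ^ t (Suc i)) = (\<Prod>i=1..m. (\<Sum>j=i..m. w' j) ^ t' i)"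
    by (rule prod.cong[OF refl])
  then show ?thesis unfolding mzf_def prod_atLeast1_atMost_Suc by (simp add: field_simps)
qed

lemma mzf_Suc_fun_upd:
  "mzf (Suc m) (t(1 := q)) w = mzf m (\<lambda>i. t (Suc i)) (\<lambda>i. w (Suc i)) / (\<Sum>j=1..Suc m. w j) ^ q"
  by (subst mzf_Suc[of m _ "\<lambda>i. t (Suc i)" _ "\<lambda>i. w (Suc i)"]) auto

section \<open>Partial fractions\<close>

definition partial_fraction_sum :: "'a::field \<Rightarrow> 'a \<Rightarrow> nat \<Rightarrow> nat \<Rightarrow> 'a" where
  "partial_fraction_sum Z W a b = (\<Sum>p=1..a+b-1. of_nat ((p - 1) choose (a - 1)) / (Z ^ p * W ^ (a + b - p)))"

lemma partial_fraction_sum_0_right: "a \<ge> 1 \<Longrightarrow> partial_fraction_sum Z W a 0 = 0"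
  unfolding partial_fraction_sum_def by (rule sum.neutral) (auto simp: binomial_eq_0)

lemma partial_fraction_sum_rec:
  assumes "Z \<noteq> 0" "a \<ge> 1" "b \<ge> 1"
  shows "Z * partial_fraction_sum Z W a b =
    (if a = 1 then 1 / W ^ b else partial_fraction_sum Z W (a - 1) b) + partial_fraction_sum Z W a (b - 1)"
proof -
  obtain a' b' where ab: "a = Suc a'" "b = Suc b'" using assms(2,3) by (metis Suc_pred' less_eq_Suc_le One_nat_def)
  let ?q = "\<lambda>p. Z ^ p * W ^ (Suc (a' + b') - p)"
  have "Z * partial_fraction_sum Z W a b =
      (\<Sum>p=1..Suc (a'+b'). Z * (of_nat ((p - 1) choose a') / (Z ^ p * W ^ (Suc (a' + b') - (p - 1)))))"
    unfolding partial_fraction_sum_def sum_distrib_left ab by simp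
  also have "\<dots> = (\<Sum>p=0..a'+b'. of_nat (p choose a') / ?q p)"
    unfolding One_nat_def sum.shift_bounds_cl_Suc_ivl using assms(1) by (intro sum.cong refl) (simp add: field_simps)
  finally have shifted: "Z * partial_fraction_sum Z W a b = (\<Sum>p=0..a'+b'. of_nat (p choose a') / ?q p)" .
  show ?thesis
  proof (cases a')
    case 0
    have "(\<Sum>p=0..a'+b'. of_nat (p choose a') / ?q p) = 1 / W ^ b + (\<Sum>p=1..b'. 1 / ?q p)"
      unfolding 0 by (simp add: sum.atLeast_Suc_atMost ab)
    moreover have "partial_fraction_sum Z W a (b - 1) = (\<Sum>p=1..b'. 1 / ?q p)"
      unfolding partial_fraction_sum_def ab 0 by simp
    ultimately show ?thesis using shifted 0 ab by simp
  next
    case (Suc a'')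
    have "(\<Sum>p=0..a'+b'. of_nat (p choose a') / ?q p) = (\<Sum>p=1..a'+b'. of_nat (p choose a') / ?q p)"
      by (simp add: sum.atLeast_Suc_atMost Suc)
    also have "\<dots> = (\<Sum>p=1..a'+b'. of_nat ((p - 1) choose a'') / ?q p + of_nat ((p - 1) choose a') / ?q p)"
    proof (intro sum.cong refl)
      fix p assume "p \<in> {1..a'+b'}"
      then obtain p' where "p = Suc p'" by (cases p) auto
      then show "of_nat (p choose a') / ?q p = of_nat ((p - 1) choose a'') / ?q p + of_nat ((p - 1) choose a') / ?q p"
        unfolding Suc by (simp add: add_divide_distrib)
    qed
    also have "\<dots> = partial_fraction_sum Z W (a - 1) b + partial_fraction_sum Z W a (b - 1)"
      unfolding sum.distrib partial_fraction_sum_def ab Suc by simp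
    finally show ?thesis using shifted Suc ab by simp
  qed
qed

lemma inverse_power_partial_fractions:
  fixes X Y :: "'a::field"
  assumes X: "X \<noteq> 0" and Y: "Y \<noteq> 0" and XY: "X + Y \<noteq> 0" and "a \<ge> 1" "b \<ge> 1"
  shows "1 / (X ^ a * Y ^ b) = partial_fraction_sum (X + Y) Y a b + partial_fraction_sum (X + Y) X b a"
  using assms(4,5)
proof (induction "a + b" arbitrary: a b rule: less_induct)
  case less
  let ?P = "partial_fraction_sum (X + Y)"
  let ?A = "if a = 1 then 1 / Y ^ b else ?P Y (a - 1) b"
  let ?B = "if b = 1 then 1 / X ^ a else ?P X (b - 1) a"
  have left: "?A + ?P X b (a - 1) = 1 / (X ^ (a - 1) * Y ^ b)"
    using less by (cases "a = 1") (simp_all add: partial_fraction_sum_0_right)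
  have right: "?B + ?P Y a (b - 1) = 1 / (X ^ a * Y ^ (b - 1))"
    using less by (cases "b = 1") (simp_all add: partial_fraction_sum_0_right)
  have "(X + Y) * (?P Y a b + ?P X b a) = (?A + ?P Y a (b - 1)) + (?B + ?P X b (a - 1))"
    unfolding distrib_left partial_fraction_sum_rec[OF XY less.prems]
      partial_fraction_sum_rec[OF XY less.prems(2,1)] ..
  also have "\<dots> = (?A + ?P X b (a - 1)) + (?B + ?P Y a (b - 1))"
    by (simp only: ac_simps)
  also have "\<dots> = (X + Y) * (1 / (X ^ a * Y ^ b))"
    unfolding left right using less.prems X Y by (cases a; cases b) (auto simp: field_simps)
  finally show ?case using mult_left_cancel[OF XY] by metis
qed

lemma sum_choose_partial_fraction:
  fixes Z W c :: "'a::field"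
  assumes "a + b \<le> Suc N"
  shows "(\<Sum>t=1..N. of_nat ((t - 1) choose (a - 1)) * (1 / Z ^ t * (if t < a + b then c / W ^ (a + b - t) else 0)))
    = c * partial_fraction_sum Z W a b"
proof -
  have "(\<Sum>t=1..N. of_nat ((t - 1) choose (a - 1)) * (1 / Z ^ t * (if t < a + b then c / W ^ (a + b - t) else 0)))
      = (\<Sum>t=1..a+b-1. of_nat ((t - 1) choose (a - 1)) * (1 / Z ^ t * (if t < a + b then c / W ^ (a + b - t) else 0)))"
    by (rule sum.mono_neutral_right) (use assms in auto)
  also have "\<dots> = c * partial_fraction_sum Z W a b"
    unfolding partial_fraction_sum_def sum_distrib_left by (intro sum.cong refl) (auto simp: ac_simps)
  finally show ?thesis .
qed

definition tail_sums_nonzero :: "nat \<Rightarrow> nat \<Rightarrow> (nat \<Rightarrow> 'a::field) \<Rightarrow> (nat \<Rightarrow> 'a) \<Rightarrow> bool" where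
  "tail_sums_nonzero k l u v \<longleftrightarrow> (\<forall>a\<in>{1..k+1}. \<forall>b\<in>{1..l+1}. (a, b) \<noteq> (k+1, l+1) \<longrightarrow>
      (\<Sum>j=a..k. u j) + (\<Sum>j=b..l. v j) \<noteq> 0)"

lemma tail_sums_nonzero_swap: "tail_sums_nonzero k l u v \<Longrightarrow> tail_sums_nonzero l k v u"
  unfolding tail_sums_nonzero_def by (auto simp: add.commute)

lemma tail_sums_nonzero_Suc:
  assumes "tail_sums_nonzero (Suc k) l u v"
  shows "tail_sums_nonzero k l (\<lambda>j. u (Suc j)) v"
  unfolding tail_sums_nonzero_def
proof (intro ballI impI)
  fix a b assume a: "a \<in> {1..k+1}" and b: "b \<in> {1..l+1}" and ab: "(a, b) \<noteq> (k+1, l+1)"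
  have "Suc a \<in> {1..Suc k + 1}" "(Suc a, b) \<noteq> (Suc k + 1, l + 1)" using a ab by auto
  then have "(\<Sum>j=Suc a..Suc k. u j) + (\<Sum>j=b..l. v j) \<noteq> 0"
    using assms b unfolding tail_sums_nonzero_def by blast
  then show "(\<Sum>j=a..k. u (Suc j)) + (\<Sum>j=b..l. v j) \<noteq> 0"
    by (metis sum.shift_bounds_cl_Suc_ivl)
qed

lemma tail_sums_nonzero_fst:
  assumes "tail_sums_nonzero k l u v" "k \<ge> 1"
  shows "(\<Sum>j=1..k. u j) \<noteq> 0"
proof -
  have "(1::nat) \<in> {1..k+1}" "l + 1 \<in> {1..l+1}" "(1, l+1) \<noteq> (k+1, l+1)" using assms(2) by auto
  then have "(\<Sum>j=1..k. u j) + (\<Sum>j=l+1..l. v j) \<noteq> 0"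
    using assms(1) unfolding tail_sums_nonzero_def by blast
  then show ?thesis by simp
qed

lemma tail_sums_nonzero_total:
  assumes "tail_sums_nonzero k l u v" "k + l \<ge> 1"
  shows "(\<Sum>j=1..k. u j) + (\<Sum>j=1..l. v j) \<noteq> 0"
proof -
  have "(1::nat) \<in> {1..k+1}" "(1::nat) \<in> {1..l+1}" "(1::nat, 1::nat) \<noteq> (k+1, l+1)"
    using assms(2) by auto
  then show ?thesis using assms(1) unfolding tail_sums_nonzero_def by blast
qed

section \<open>Generalised coefficients\<close>

text \<open>
  \<open>ccoef\<close> is the case \<open>d = 0\<close>, \<open>\<sigma> = True\<close>. The flag \<open>\<sigma>\<close> tells whether a virtual position 0
  belongs to the image of \<open>\<phi>\<close>, so that position 1 may count as a transition, and the deficit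
  \<open>d\<close> enters every transition binomial.
\<close>

definition shuffle_coeff :: "nat \<Rightarrow> nat \<Rightarrow> (nat \<Rightarrow> nat) \<Rightarrow> (nat \<Rightarrow> nat) \<Rightarrow> (nat \<Rightarrow> nat)
    \<Rightarrow> (nat \<Rightarrow> nat) \<Rightarrow> (nat \<Rightarrow> nat) \<Rightarrow> int \<Rightarrow> bool \<Rightarrow> nat \<Rightarrow> nat" where
  "shuffle_coeff k l r s t \<phi> \<psi> d \<sigma> i =
     (let h = shuffle_vec k l \<phi> \<psi> r s;
          A = \<phi> ` {1..k};
          prev = (if i = 1 then \<sigma> else i - 1 \<in> A);
          cur = (i \<in> A);
          Ti = (\<Sum>j=1..i. t j);
          a = card {j \<in> {1..k}. \<phi> j \<in> {1..i}};
          b = card {j \<in> {1..l}. \<psi> j \<in> {1..i}}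
      in if prev = cur then (t i - 1) choose (h i - 1)
         else ibinom (t i - 1) (d + int Ti - int (\<Sum>j=1..a. r j) - int (\<Sum>j=1..b. s j)))"

definition shuffle_term :: "nat \<Rightarrow> nat \<Rightarrow> (nat \<Rightarrow> nat) \<Rightarrow> (nat \<Rightarrow> nat) \<Rightarrow> (nat \<Rightarrow> 'a::field)
    \<Rightarrow> (nat \<Rightarrow> 'a) \<Rightarrow> int \<Rightarrow> bool \<Rightarrow> shuffle_pair \<Rightarrow> (nat \<Rightarrow> nat) \<Rightarrow> 'a" where
  "shuffle_term k l r s u v d \<sigma> p t =
     of_nat (\<Prod>i=1..k+l. shuffle_coeff k l r s t (fst p) (snd p) d \<sigma> i) *
     mzf (k+l) t (shuffle_vec k l (fst p) (snd p) u v)"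

definition shuffle_sum :: "nat \<Rightarrow> nat \<Rightarrow> (nat \<Rightarrow> nat) \<Rightarrow> (nat \<Rightarrow> nat) \<Rightarrow> (nat \<Rightarrow> 'a::field)
    \<Rightarrow> (nat \<Rightarrow> 'a) \<Rightarrow> int \<Rightarrow> bool \<Rightarrow> nat \<Rightarrow> 'a" where
  "shuffle_sum k l r s u v d \<sigma> N =
     (\<Sum>p\<in>shuffle_pairs k l. \<Sum>t\<in>compositions (k+l) N. shuffle_term k l r s u v d \<sigma> p t)"

definition shuffle_sum_fst :: "nat \<Rightarrow> nat \<Rightarrow> (nat \<Rightarrow> nat) \<Rightarrow> (nat \<Rightarrow> nat) \<Rightarrow> (nat \<Rightarrow> 'a::field)
    \<Rightarrow> (nat \<Rightarrow> 'a) \<Rightarrow> int \<Rightarrow> bool \<Rightarrow> nat \<Rightarrow> 'a" where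
  "shuffle_sum_fst k l r s u v d \<sigma> N =
     (\<Sum>p\<in>{p \<in> shuffle_pairs k l. 1 \<in> fst p ` {1..k}}.
        \<Sum>t\<in>compositions (k+l) N. shuffle_term k l r s u v d \<sigma> p t)"

lemma shuffle_coeff_swap:
  assumes "(\<phi>, \<psi>) \<in> shuffle_pairs k l" "i \<in> {1..k+l}"
  shows "shuffle_coeff l k s r t \<psi> \<phi> d (\<not> \<sigma>) i = shuffle_coeff k l r s t \<phi> \<psi> d \<sigma> i"
proof -
  have prev_cur: "((if i = 1 then \<not> \<sigma> else i - 1 \<in> \<psi> ` {1..l}) = (i \<in> \<psi> ` {1..l})) =
        ((if i = 1 then \<sigma> else i - 1 \<in> \<phi> ` {1..k}) = (i \<in> \<phi> ` {1..k}))"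
  proof (cases "i = 1")
    case False
    then have "i - 1 \<in> {1..k+l}" using assms(2) by auto
    then have "i - 1 \<in> \<psi> ` {1..l} \<longleftrightarrow> i - 1 \<notin> \<phi> ` {1..k}"
      by (rule shuffle_pairs_snd_image_iff[OF assms(1)])
    then show ?thesis using shuffle_pairs_snd_image_iff[OF assms] False by simp
  qed (use shuffle_pairs_snd_image_iff[OF assms] in simp)
  show ?thesis
    unfolding shuffle_coeff_def Let_def prev_cur shuffle_vec_swap[OF assms] by (simp add: algebra_simps)
qed

lemma shuffle_term_swap:
  assumes "p \<in> shuffle_pairs k l"
  shows "shuffle_term l k s r v u d (\<not> \<sigma>) (prod.swap p) t = shuffle_term k l r s u v d \<sigma> p t"
proof -
  obtain \<phi> \<psi> where p: "p = (\<phi>, \<psi>)" by (cases p)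
  have coeff: "(\<Prod>i=1..k+l. shuffle_coeff l k s r t \<psi> \<phi> d (\<not> \<sigma>) i) =
      (\<Prod>i=1..k+l. shuffle_coeff k l r s t \<phi> \<psi> d \<sigma> i)"
    by (rule prod.cong[OF refl]) (rule shuffle_coeff_swap[OF assms[unfolded p]])
  have vec: "mzf (k+l) t (shuffle_vec l k \<psi> \<phi> v u) = mzf (k+l) t (shuffle_vec k l \<phi> \<psi> u v)"
    by (rule mzf_cong) (rule shuffle_vec_swap[OF assms[unfolded p]])
  have "l + k = k + l" by simp
  then show ?thesis unfolding shuffle_term_def p by (simp only: swap_simp fst_conv snd_conv coeff vec)
qed

lemma shuffle_sum_split:
  assumes "k + l \<ge> 1"
  shows "shuffle_sum k l r s u v d \<sigma> N =
    shuffle_sum_fst k l r s u v d \<sigma> N + shuffle_sum_fst l k s r v u d (\<not> \<sigma>) N"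
proof -
  let ?P = "\<lambda>p. 1 \<in> fst p ` {1..k}"
  let ?g = "\<lambda>p. \<Sum>t\<in>compositions (k+l) N. shuffle_term k l r s u v d \<sigma> p t"
  have "shuffle_sum k l r s u v d \<sigma> N = sum ?g ({p \<in> shuffle_pairs k l. ?P p} \<union> {p \<in> shuffle_pairs k l. \<not> ?P p})"
    unfolding shuffle_sum_def by (rule arg_cong[where f = "sum ?g"]) auto
  also have "\<dots> = sum ?g {p \<in> shuffle_pairs k l. ?P p} + sum ?g {p \<in> shuffle_pairs k l. \<not> ?P p}"
    by (rule sum.union_disjoint) (auto intro: finite_subset[OF _ finite_shuffle_pairs])
  also have "sum ?g {p \<in> shuffle_pairs k l. \<not> ?P p} = shuffle_sum_fst l k s r v u d (\<not> \<sigma>) N"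
    unfolding shuffle_sum_fst_def
  proof (rule sum.reindex_bij_witness[where i = prod.swap and j = prod.swap])
    fix p assume p: "p \<in> {p \<in> shuffle_pairs k l. \<not> ?P p}"
    then have "1 \<in> snd p ` {1..l}"
      using shuffle_pairs_snd_image_iff[of "fst p" "snd p" k l 1] assms by auto
    then show "prod.swap p \<in> {p \<in> shuffle_pairs l k. 1 \<in> fst p ` {1..l}}"
      using p by (cases p) (auto simp: shuffle_pairs_swap)
    have "l + k = k + l" by simp
    then show "(\<Sum>t\<in>compositions (l+k) N. shuffle_term l k s r v u d (\<not> \<sigma>) (prod.swap p) t) = ?g p"
      using p shuffle_term_swap by (metis (no_types, lifting) mem_Collect_eq sum.cong)
  next
    fix p assume "p \<in> {p \<in> shuffle_pairs l k. 1 \<in> fst p ` {1..l}}"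
    then show "prod.swap p \<in> {p \<in> shuffle_pairs k l. \<not> ?P p}"
      using shuffle_pairs_disjoint[of "snd p" "fst p" k l] by (cases p) (auto simp: shuffle_pairs_swap)
  qed auto
  finally show ?thesis unfolding shuffle_sum_fst_def .
qed

lemma shuffle_sum_fst_0: "shuffle_sum_fst 0 l r s u v d \<sigma> N = 0"
  unfolding shuffle_sum_fst_def by simp

lemma shuffle_sum_0_0: "shuffle_sum 0 0 r s u v d \<sigma> 0 = 1"
proof -
  have "shuffle_pairs 0 0 = {(\<lambda>_. undefined, \<lambda>_. undefined)}"
    by (auto simp: shuffle_pairs_def strict_mono_on_def)
  then show ?thesis by (simp add: shuffle_sum_def shuffle_term_def mzf_def compositions_0)
qed

definition shuffle_cons :: "nat \<Rightarrow> nat \<Rightarrow> shuffle_pair \<Rightarrow> shuffle_pair" where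
  "shuffle_cons k l p =
     ((\<lambda>j. if j \<in> {1..Suc k} then (if j = 1 then 1 else Suc (fst p (j - 1))) else undefined),
      (\<lambda>j. if j \<in> {1..l} then Suc (snd p j) else undefined))"

definition shuffle_uncons :: "nat \<Rightarrow> nat \<Rightarrow> shuffle_pair \<Rightarrow> shuffle_pair" where
  "shuffle_uncons k l q =
     ((\<lambda>j. if j \<in> {1..k} then fst q (Suc j) - 1 else undefined),
      (\<lambda>j. if j \<in> {1..l} then snd q j - 1 else undefined))"

lemma shuffle_cons_fst_1 [simp]: "fst (shuffle_cons k l p) 1 = 1"
  by (simp add: shuffle_cons_def)

lemma shuffle_cons_fst_Suc: "j \<in> {1..k} \<Longrightarrow> fst (shuffle_cons k l p) (Suc j) = Suc (fst p j)"
  by (simp add: shuffle_cons_def)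

lemma shuffle_cons_snd: "j \<in> {1..l} \<Longrightarrow> snd (shuffle_cons k l p) j = Suc (snd p j)"
  by (simp add: shuffle_cons_def)

lemma image_fst_shuffle_cons: "fst (shuffle_cons k l p) ` {1..Suc k} = insert 1 (Suc ` fst p ` {1..k})"
proof -
  have "fst (shuffle_cons k l p) ` {1..Suc k} = insert 1 ((\<lambda>j. fst (shuffle_cons k l p) (Suc j)) ` {1..k})"
    by (simp only: atLeast1_atMost_Suc_eq_insert image_insert image_image shuffle_cons_fst_1)
  also have "(\<lambda>j. fst (shuffle_cons k l p) (Suc j)) ` {1..k} = Suc ` fst p ` {1..k}"
    unfolding image_image by (rule image_cong) (simp_all add: shuffle_cons_fst_Suc)
  finally show ?thesis .
qed

lemma image_snd_shuffle_cons: "snd (shuffle_cons k l p) ` {1..l} = Suc ` snd p ` {1..l}"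
  by (auto simp: shuffle_cons_snd image_iff)

lemma shuffle_cons_mem:
  assumes "p \<in> shuffle_pairs k l"
  shows "shuffle_cons k l p \<in> shuffle_pairs (Suc k) l"
proof -
  obtain \<phi>' \<psi>' where p: "p = (\<phi>', \<psi>')" by (cases p)
  note D = shuffle_pairsD[OF assms[unfolded p]]
  let ?\<phi> = "fst (shuffle_cons k l p)" and ?\<psi> = "snd (shuffle_cons k l p)"
  have "?\<phi> \<in> {1..Suc k} \<rightarrow>\<^sub>E {1..Suc k + l}"
  proof (rule PiE_I)
    fix x assume x: "x \<in> {1..Suc k}"
    show "?\<phi> x \<in> {1..Suc k + l}"
    proof (cases "x = 1")
      case False
      then have "x - 1 \<in> {1..k}" using x by auto
      then have "\<phi>' (x - 1) \<in> {1..k+l}" using PiE_mem[OF D(1)] by blast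
      then show ?thesis using x False by (simp add: shuffle_cons_def p)
    qed (simp add: shuffle_cons_def)
  qed (auto simp: shuffle_cons_def)
  moreover have "?\<psi> \<in> {1..l} \<rightarrow>\<^sub>E {1..Suc k + l}"
    by (rule PiE_I) (use PiE_mem[OF D(2)] in \<open>auto simp: shuffle_cons_def p\<close>)
  moreover have "strict_mono_on {1..Suc k} ?\<phi>"
  proof (rule strict_mono_onI)
    fix x y assume xy: "x \<in> {1..Suc k}" "y \<in> {1..Suc k}" "x < y"
    then have y: "y - 1 \<in> {1..k}" by auto
    show "?\<phi> x < ?\<phi> y"
    proof (cases "x = 1")
      case True
      then show ?thesis using xy PiE_mem[OF D(1) y] by (simp add: shuffle_cons_def p)
    next
      case False
      then have "\<phi>' (x - 1) < \<phi>' (y - 1)"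
        using xy strict_mono_onD[OF D(3), of "x - 1" "y - 1"] by auto
      then show ?thesis using xy False by (simp add: shuffle_cons_def p)
    qed
  qed
  moreover have "strict_mono_on {1..l} ?\<psi>"
    using D(4) by (auto intro!: strict_mono_onI dest: strict_mono_onD simp: shuffle_cons_def p)
  moreover have "?\<phi> ` {1..Suc k} \<union> ?\<psi> ` {1..l} = {1..Suc k + l}"
  proof -
    have "?\<phi> ` {1..Suc k} \<union> ?\<psi> ` {1..l} = insert 1 (Suc ` (\<phi>' ` {1..k} \<union> \<psi>' ` {1..l}))"
      unfolding image_fst_shuffle_cons image_snd_shuffle_cons p by auto
    also have "\<dots> = {1..Suc k + l}" using D(5) by auto
    finally show ?thesis .
  qed
  ultimately show ?thesis by (simp add: shuffle_pairs_def case_prod_beta)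
qed

lemma shuffle_pairs_ge_2:
  assumes q: "(\<phi>, \<psi>) \<in> shuffle_pairs (Suc k) l" "1 \<in> \<phi> ` {1..Suc k}"
  shows "\<And>j. j \<in> {1..k} \<Longrightarrow> \<phi> (Suc j) \<ge> 2" and "\<And>j. j \<in> {1..l} \<Longrightarrow> \<psi> j \<ge> 2"
proof -
  have \<phi>1: "\<phi> 1 = 1" using shuffle_pairs_fst_1[OF q] .
  show "\<phi> (Suc j) \<ge> 2" if "j \<in> {1..k}" for j
    using that strict_mono_onD[OF shuffle_pairsD(3)[OF q(1)], of 1 "Suc j"] \<phi>1 by auto
  show "\<psi> j \<ge> 2" if "j \<in> {1..l}" for j
  proof -
    have "\<psi> j \<noteq> 1" using that \<phi>1 shuffle_pairs_disjoint[OF q(1)] by force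
    then show ?thesis using PiE_mem[OF shuffle_pairsD(2)[OF q(1)] that] by simp
  qed
qed

lemma shuffle_cons_uncons:
  assumes q: "q \<in> shuffle_pairs (Suc k) l" "1 \<in> fst q ` {1..Suc k}"
  shows "shuffle_cons k l (shuffle_uncons k l q) = q"
proof -
  obtain \<phi> \<psi> where qe: "q = (\<phi>, \<psi>)" by (cases q)
  note D = shuffle_pairsD[OF q(1)[unfolded qe]]
  note ge = shuffle_pairs_ge_2[OF q[unfolded qe fst_conv]]
  have "fst (shuffle_cons k l (shuffle_uncons k l q)) j = \<phi> j" for j
  proof (cases "j \<in> {2..Suc k}")
    case True
    then have "j - 1 \<in> {1..k}" "Suc (j - 1) = j" by auto
    then show ?thesis using ge(1)[of "j - 1"] by (auto simp: shuffle_cons_def shuffle_uncons_def qe)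
  qed (use D(1) shuffle_pairs_fst_1[OF q[unfolded qe fst_conv]] in
      \<open>auto simp: PiE_def extensional_def shuffle_cons_def\<close>)
  moreover have "snd (shuffle_cons k l (shuffle_uncons k l q)) j = \<psi> j" for j
  proof (cases "j \<in> {1..l}")
    case True
    then show ?thesis using ge(2)[OF True] by (simp add: shuffle_cons_def shuffle_uncons_def qe)
  qed (use D(2) in \<open>auto simp: PiE_def extensional_def shuffle_cons_def\<close>)
  ultimately show ?thesis by (simp add: qe prod_eq_iff fun_eq_iff)
qed

lemma shuffle_uncons_mem:
  assumes q: "q \<in> shuffle_pairs (Suc k) l" "1 \<in> fst q ` {1..Suc k}"
  shows "shuffle_uncons k l q \<in> shuffle_pairs k l"
proof -
  obtain \<phi> \<psi> where qe: "q = (\<phi>, \<psi>)" by (cases q)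
  note D = shuffle_pairsD[OF q(1)[unfolded qe]]
  note ge = shuffle_pairs_ge_2[OF q[unfolded qe fst_conv]]
  let ?\<phi> = "fst (shuffle_uncons k l q)" and ?\<psi> = "snd (shuffle_uncons k l q)"
  have \<phi>': "?\<phi> \<in> {1..k} \<rightarrow>\<^sub>E {1..k + l}"
    using ge(1) PiE_mem[OF D(1)] by (fastforce simp: shuffle_uncons_def qe PiE_def Pi_def)
  have \<psi>': "?\<psi> \<in> {1..l} \<rightarrow>\<^sub>E {1..k + l}"
    using ge(2) PiE_mem[OF D(2)] by (fastforce simp: shuffle_uncons_def qe PiE_def Pi_def)
  have "strict_mono_on {1..k} ?\<phi>"
  proof (rule strict_mono_onI)
    fix x y assume xy: "x \<in> {1..k}" "y \<in> {1..k}" "x < y"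
    then have "\<phi> (Suc x) < \<phi> (Suc y)" using strict_mono_onD[OF D(3), of "Suc x" "Suc y"] by auto
    then show "?\<phi> x < ?\<phi> y" using xy ge(1)[of x] by (simp add: shuffle_uncons_def qe)
  qed
  moreover have "strict_mono_on {1..l} ?\<psi>"
  proof (rule strict_mono_onI)
    fix x y assume xy: "x \<in> {1..l}" "y \<in> {1..l}" "x < y"
    then have "\<psi> x < \<psi> y" using strict_mono_onD[OF D(4), of x y] by auto
    then show "?\<psi> x < ?\<psi> y" using xy ge(2)[of x] by (simp add: shuffle_uncons_def qe)
  qed
  moreover have "?\<phi> ` {1..k} \<union> ?\<psi> ` {1..l} = {1..k + l}"
  proof -
    have "\<phi> ` {1..Suc k} = insert 1 (Suc ` ?\<phi> ` {1..k})" "\<psi> ` {1..l} = Suc ` ?\<psi> ` {1..l}"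
      using image_fst_shuffle_cons[of k l "shuffle_uncons k l q"] image_snd_shuffle_cons[of k l "shuffle_uncons k l q"]
      unfolding shuffle_cons_uncons[OF q] by (simp_all add: qe)
    then have "insert 1 (Suc ` (?\<phi> ` {1..k} \<union> ?\<psi> ` {1..l})) = insert 1 (Suc ` {1..k+l})"
      using D(5) unfolding atLeast1_atMost_Suc_eq_insert[symmetric] by (auto simp: image_Un)
    moreover have "1 \<notin> Suc ` (?\<phi> ` {1..k} \<union> ?\<psi> ` {1..l})" "1 \<notin> Suc ` {1..k+l}"
      using PiE_mem[OF \<phi>'] PiE_mem[OF \<psi>'] by fastforce+
    ultimately have "Suc ` (?\<phi> ` {1..k} \<union> ?\<psi> ` {1..l}) = Suc ` {1..k+l}"
      by (metis insert_ident)
    then show ?thesis by (simp only: inj_image_eq_iff[OF inj_Suc])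
  qed
  ultimately show ?thesis using \<phi>' \<psi>' by (simp add: shuffle_pairs_def case_prod_beta)
qed

lemma shuffle_uncons_cons:
  assumes "p \<in> shuffle_pairs k l"
  shows "shuffle_uncons k l (shuffle_cons k l p) = p"
  using shuffle_pairsD(1,2)[of "fst p" "snd p" k l] assms
  by (auto simp: shuffle_uncons_def shuffle_cons_def PiE_def extensional_def fun_eq_iff prod_eq_iff)

lemma bij_betw_shuffle_cons:
  "bij_betw (shuffle_cons k l) (shuffle_pairs k l) {q \<in> shuffle_pairs (Suc k) l. 1 \<in> fst q ` {1..Suc k}}"
proof (rule bij_betw_byWitness[where f' = "shuffle_uncons k l"])
  show "shuffle_cons k l ` shuffle_pairs k l \<subseteq> {q \<in> shuffle_pairs (Suc k) l. 1 \<in> fst q ` {1..Suc k}}"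
    using shuffle_cons_mem image_fst_shuffle_cons by auto
qed (use shuffle_cons_uncons shuffle_uncons_mem shuffle_uncons_cons in auto)

lemma ibinom_diff:
  assumes "t \<ge> 1"
  shows "ibinom (t - 1) (int t - e) = (if e \<ge> 1 then (t - 1) choose (nat e - 1) else 0)"
proof (cases "e \<ge> 1")
  case True
  show ?thesis
  proof (cases "e \<le> int t")
    case le: True
    then have "nat (int t - e) = (t - 1) - (nat e - 1)" "nat e - 1 \<le> t - 1" using True assms by auto
    then have "ibinom (t - 1) (int t - e) = (t - 1) choose ((t - 1) - (nat e - 1))"
      using le by (simp add: ibinom_def)
    also have "\<dots> = (t - 1) choose (nat e - 1)"
      by (rule binomial_symmetric[symmetric]) fact
    finally show ?thesis using True by simp
  qed (use True assms in \<open>auto simp: ibinom_def binomial_eq_0\<close>)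
qed (use assms in \<open>auto simp: ibinom_def binomial_eq_0\<close>)

definition first_coeff :: "bool \<Rightarrow> int \<Rightarrow> nat \<Rightarrow> nat \<Rightarrow> nat" where
  "first_coeff \<sigma> d r1 t1 = (if \<sigma> then (t1 - 1) choose (r1 - 1) else ibinom (t1 - 1) (d + int t1 - int r1))"

lemma first_coeff_eq_0:
  assumes "0 \<le> d" "t1 \<ge> 1" "d + int t1 < int r1"
  shows "first_coeff \<sigma> d r1 t1 = 0"
  using assms by (auto simp: first_coeff_def ibinom_def binomial_eq_0)

lemma first_coeff_False:
  assumes "t1 \<ge> 1"
  shows "first_coeff False d r1 t1 = (if d < int r1 then (t1 - 1) choose (nat (int r1 - d) - 1) else 0)"
  using ibinom_diff[OF assms, of "int r1 - d"] by (simp add: first_coeff_def algebra_simps)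

context
  fixes k l :: nat and p :: shuffle_pair
  assumes p: "p \<in> shuffle_pairs k l"
begin

lemma shuffle_vec_shuffle_cons_1:
  "shuffle_vec (Suc k) l (fst (shuffle_cons k l p)) (snd (shuffle_cons k l p)) x y 1 = x 1"
proof -
  have "(fst (shuffle_cons k l p), snd (shuffle_cons k l p)) \<in> shuffle_pairs (Suc k) l"
    using shuffle_cons_mem[OF p] by simp
  from shuffle_vec_fst[OF this, of 1 x y, unfolded shuffle_cons_fst_1] show ?thesis by simp
qed

lemma shuffle_vec_shuffle_cons_Suc:
  assumes i: "i \<in> {1..k+l}"
  shows "shuffle_vec (Suc k) l (fst (shuffle_cons k l p)) (snd (shuffle_cons k l p)) x y (Suc i)
       = shuffle_vec k l (fst p) (snd p) (\<lambda>j. x (Suc j)) y i"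
proof -
  have p': "(fst p, snd p) \<in> shuffle_pairs k l" using p by simp
  have q: "(fst (shuffle_cons k l p), snd (shuffle_cons k l p)) \<in> shuffle_pairs (Suc k) l"
    using shuffle_cons_mem[OF p] by simp
  have "i \<in> fst p ` {1..k} \<union> snd p ` {1..l}" using shuffle_pairsD(5)[OF p'] i by simp
  then show ?thesis
  proof
    assume "i \<in> fst p ` {1..k}"
    then obtain j where j: "j \<in> {1..k}" "i = fst p j" by auto
    then have "Suc i = fst (shuffle_cons k l p) (Suc j)" "Suc j \<in> {1..Suc k}"
      by (simp_all add: shuffle_cons_fst_Suc)
    then show ?thesis using shuffle_vec_fst[OF q] shuffle_vec_fst[OF p'] j by metis
  next
    assume "i \<in> snd p ` {1..l}"
    then obtain j where j: "j \<in> {1..l}" "i = snd p j" by auto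
    then have "Suc i = snd (shuffle_cons k l p) j" by (simp add: shuffle_cons_snd)
    then show ?thesis using shuffle_vec_snd[OF q] shuffle_vec_snd[OF p'] j by metis
  qed
qed

lemma card_shuffle_cons_fst:
  "card {j \<in> {1..Suc k}. fst (shuffle_cons k l p) j \<in> {1..Suc i}} = Suc (card {j \<in> {1..k}. fst p j \<in> {1..i}})"
proof -
  have ge: "fst p j \<ge> 1" if "j \<in> {1..k}" for j
    using PiE_mem[OF shuffle_pairsD(1)[of "fst p" "snd p" k l] that] p by simp
  have eq: "{j \<in> {1..Suc k}. fst (shuffle_cons k l p) j \<in> {1..Suc i}} = insert 1 (Suc ` {j \<in> {1..k}. fst p j \<in> {1..i}})"
  proof (rule set_eqI)
    fix x
    show "x \<in> {j \<in> {1..Suc k}. fst (shuffle_cons k l p) j \<in> {1..Suc i}} \<longleftrightarrow>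
        x \<in> insert 1 (Suc ` {j \<in> {1..k}. fst p j \<in> {1..i}})"
    proof (cases "x \<in> {2..Suc k}")
      case True
      then have x: "x - 1 \<in> {1..k}" "x = Suc (x - 1)" by auto
      then have "fst (shuffle_cons k l p) x = Suc (fst p (x - 1))" by (metis shuffle_cons_fst_Suc)
      then show ?thesis using x ge[OF x(1)] by (auto simp: image_iff)
    qed (auto simp: shuffle_cons_def)
  qed
  have "card (insert 1 (Suc ` {j \<in> {1..k}. fst p j \<in> {1..i}})) = Suc (card (Suc ` {j \<in> {1..k}. fst p j \<in> {1..i}}))"
    by (rule card_insert_disjoint) auto
  then show ?thesis unfolding eq by (simp add: card_image)
qed

lemma card_shuffle_cons_snd:
  "card {j \<in> {1..l}. snd (shuffle_cons k l p) j \<in> {1..Suc i}} = card {j \<in> {1..l}. snd p j \<in> {1..i}}"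
proof -
  have ge: "snd p j \<ge> 1" if "j \<in> {1..l}" for j
    using PiE_mem[OF shuffle_pairsD(2)[of "fst p" "snd p" k l] that] p by simp
  have "{j \<in> {1..l}. snd (shuffle_cons k l p) j \<in> {1..Suc i}} = {j \<in> {1..l}. snd p j \<in> {1..i}}"
    using ge by (auto simp: shuffle_cons_snd)
  then show ?thesis by simp
qed

lemma shuffle_coeff_shuffle_cons_1:
  "shuffle_coeff (Suc k) l r s (comp_cons (k + l) t1 t) (fst (shuffle_cons k l p)) (snd (shuffle_cons k l p)) d \<sigma> 1
    = first_coeff \<sigma> d (r 1) t1"
proof -
  have "card {j \<in> {1..Suc k}. fst (shuffle_cons k l p) j \<in> {1..1}} = 1"
    using card_shuffle_cons_fst[of 0] by simp
  moreover have "card {j \<in> {1..l}. snd (shuffle_cons k l p) j \<in> {1..1}} = 0"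
    using card_shuffle_cons_snd[of 0] by simp
  moreover have "1 \<in> fst (shuffle_cons k l p) ` {1..Suc k}"
    unfolding image_fst_shuffle_cons by simp
  ultimately show ?thesis
    unfolding shuffle_coeff_def Let_def shuffle_vec_shuffle_cons_1 first_coeff_def
    by (simp add: comp_cons_def)
qed

lemma shuffle_coeff_shuffle_cons_Suc:
  assumes i: "i \<in> {1..k+l}"
  shows "shuffle_coeff (Suc k) l r s (comp_cons (k + l) t1 t) (fst (shuffle_cons k l p)) (snd (shuffle_cons k l p)) d \<sigma> (Suc i)
    = shuffle_coeff k l (\<lambda>j. r (Suc j)) s t (fst p) (snd p) (d + int t1 - int (r 1)) True i"
proof -
  have prev: "(Suc i - 1 \<in> fst (shuffle_cons k l p) ` {1..Suc k}) = (if i = 1 then True else i - 1 \<in> fst p ` {1..k})"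
  proof -
    obtain i' where "i = Suc i'" using i by (cases i) auto
    then show ?thesis unfolding image_fst_shuffle_cons by (cases i') auto
  qed
  have cur: "(Suc i \<in> fst (shuffle_cons k l p) ` {1..Suc k}) = (i \<in> fst p ` {1..k})"
    unfolding image_fst_shuffle_cons using i by auto
  have T: "(\<Sum>j=1..Suc i. comp_cons (k + l) t1 t j) = t1 + (\<Sum>j=1..i. t j)"
    using i by (intro sum_comp_cons) simp
  have t: "comp_cons (k + l) t1 t (Suc i) = t i" using i by simp
  show ?thesis
    unfolding shuffle_coeff_def Let_def card_shuffle_cons_fst card_shuffle_cons_snd
      shuffle_vec_shuffle_cons_Suc[OF i] sum_atLeast1_atMost_Suc[where g = r] T t
    using i prev cur by (simp add: algebra_simps)
qed

lemma shuffle_term_shuffle_cons: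
  "shuffle_term (Suc k) l r s u v d \<sigma> (shuffle_cons k l p) (comp_cons (k + l) t1 t)
   = of_nat (first_coeff \<sigma> d (r 1) t1) * (1 / ((\<Sum>j=1..Suc k. u j) + (\<Sum>j=1..l. v j)) ^ t1 *
      shuffle_term k l (\<lambda>j. r (Suc j)) s (\<lambda>j. u (Suc j)) v (d + int t1 - int (r 1)) True p t)"
proof -
  let ?q = "shuffle_cons k l p"
  have "(\<Prod>i=1..k + l. shuffle_coeff (Suc k) l r s (comp_cons (k + l) t1 t) (fst ?q) (snd ?q) d \<sigma> (Suc i))
      = (\<Prod>i=1..k + l. shuffle_coeff k l (\<lambda>j. r (Suc j)) s t (fst p) (snd p) (d + int t1 - int (r 1)) True i)"
    by (rule prod.cong[OF refl]) (rule shuffle_coeff_shuffle_cons_Suc)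
  then have coeff: "(\<Prod>i=1..Suc (k + l). shuffle_coeff (Suc k) l r s (comp_cons (k + l) t1 t) (fst ?q) (snd ?q) d \<sigma> i)
      = first_coeff \<sigma> d (r 1) t1 *
        (\<Prod>i=1..k + l. shuffle_coeff k l (\<lambda>j. r (Suc j)) s t (fst p) (snd p) (d + int t1 - int (r 1)) True i)"
    unfolding prod_atLeast1_atMost_Suc shuffle_coeff_shuffle_cons_1 by simp
  have total: "(\<Sum>j=1..Suc (k + l). shuffle_vec (Suc k) l (fst ?q) (snd ?q) u v j) = (\<Sum>j=1..Suc k. u j) + (\<Sum>j=1..l. v j)"
    using sum_shuffle_vec[of "fst ?q" "snd ?q" "Suc k" l u v] shuffle_cons_mem[OF p] by simp
  have "mzf (Suc (k + l)) (comp_cons (k + l) t1 t) (shuffle_vec (Suc k) l (fst ?q) (snd ?q) u v)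
     = mzf (k + l) t (shuffle_vec k l (fst p) (snd p) (\<lambda>j. u (Suc j)) v) /
       (\<Sum>j=1..Suc (k + l). shuffle_vec (Suc k) l (fst ?q) (snd ?q) u v j) ^ comp_cons (k + l) t1 t 1"
    by (rule mzf_Suc) (simp_all add: shuffle_vec_shuffle_cons_Suc)
  then have "mzf (Suc (k + l)) (comp_cons (k + l) t1 t) (shuffle_vec (Suc k) l (fst ?q) (snd ?q) u v)
     = mzf (k + l) t (shuffle_vec k l (fst p) (snd p) (\<lambda>j. u (Suc j)) v) /
       ((\<Sum>j=1..Suc k. u j) + (\<Sum>j=1..l. v j)) ^ t1"
    by (simp only: total comp_cons_1)
  then show ?thesis unfolding shuffle_term_def add_Suc coeff by (simp add: field_simps)
qed

end

lemma shuffle_sum_fst_Suc: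
  "shuffle_sum_fst (Suc k) l r s u v d \<sigma> N = (\<Sum>t1=1..N. of_nat (first_coeff \<sigma> d (r 1) t1) *
      (1 / ((\<Sum>j=1..Suc k. u j) + (\<Sum>j=1..l. v j)) ^ t1 *
       shuffle_sum k l (\<lambda>j. r (Suc j)) s (\<lambda>j. u (Suc j)) v (d + int t1 - int (r 1)) True (N - t1)))"
proof -
  have "shuffle_sum_fst (Suc k) l r s u v d \<sigma> N = (\<Sum>p\<in>shuffle_pairs k l.
      \<Sum>t\<in>compositions (Suc (k + l)) N. shuffle_term (Suc k) l r s u v d \<sigma> (shuffle_cons k l p) t)"
    unfolding shuffle_sum_fst_def add_Suc by (rule sum.reindex_bij_betw[OF bij_betw_shuffle_cons, symmetric])
  also have "\<dots> = (\<Sum>p\<in>shuffle_pairs k l. \<Sum>t1=1..N. \<Sum>t\<in>compositions (k + l) (N - t1).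
      of_nat (first_coeff \<sigma> d (r 1) t1) * (1 / ((\<Sum>j=1..Suc k. u j) + (\<Sum>j=1..l. v j)) ^ t1 *
      shuffle_term k l (\<lambda>j. r (Suc j)) s (\<lambda>j. u (Suc j)) v (d + int t1 - int (r 1)) True p t))"
    by (intro sum.cong refl) (simp add: sum_compositions_Suc shuffle_term_shuffle_cons)
  also have "\<dots> = (\<Sum>t1=1..N. of_nat (first_coeff \<sigma> d (r 1) t1) *
      (1 / ((\<Sum>j=1..Suc k. u j) + (\<Sum>j=1..l. v j)) ^ t1 *
       shuffle_sum k l (\<lambda>j. r (Suc j)) s (\<lambda>j. u (Suc j)) v (d + int t1 - int (r 1)) True (N - t1)))"
    unfolding shuffle_sum_def by (subst sum.swap) (simp add: sum_distrib_left)
  finally show ?thesis .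
qed

section \<open>Evaluation by induction on \<open>k + l\<close>\<close>

text \<open>
  Peeling off a first position of weight \<open>t\<^sub>1\<close> lowers \<open>s\<^sub>1\<close> by \<open>t\<^sub>1 - r\<^sub>1\<close>; the product vanishes
  once the lowered exponent would be nonpositive.
\<close>

definition lowered_product :: "nat \<Rightarrow> nat \<Rightarrow> (nat \<Rightarrow> nat) \<Rightarrow> (nat \<Rightarrow> nat) \<Rightarrow> (nat \<Rightarrow> 'a::field)
    \<Rightarrow> (nat \<Rightarrow> 'a) \<Rightarrow> int \<Rightarrow> 'a" where
  "lowered_product k l r s u v d =
     (if l = 0 then (if d = 0 then mzf k r u else 0)
      else if d < int (s 1) then mzf k r u * mzf l (s(1 := nat (int (s 1) - d))) v else 0)"

lemma lowered_product_0: "lowered_product k 0 r s u v d = (if d = 0 then mzf k r u else 0)"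
  by (simp add: lowered_product_def)

lemma lowered_product_Suc:
  "lowered_product k (Suc l) r s u v d = (if d < int (s 1) then
     mzf k r u * (mzf l (\<lambda>j. s (Suc j)) (\<lambda>j. v (Suc j)) / (\<Sum>j=1..Suc l. v j) ^ nat (int (s 1) - d)) else 0)"
  unfolding lowered_product_def mzf_Suc_fun_upd by simp

definition admissible :: "nat \<Rightarrow> nat \<Rightarrow> (nat \<Rightarrow> nat) \<Rightarrow> (nat \<Rightarrow> nat) \<Rightarrow> (nat \<Rightarrow> 'a::field)
    \<Rightarrow> (nat \<Rightarrow> 'a) \<Rightarrow> int \<Rightarrow> nat \<Rightarrow> bool" where
  "admissible k l r s u v d N \<longleftrightarrow> (\<forall>i\<in>{1..k}. r i \<ge> 1) \<and> (\<forall>i\<in>{1..l}. s i \<ge> 1) \<and>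
     tail_sums_nonzero k l u v \<and> 0 \<le> d \<and> int N + d = int (\<Sum>i=1..k. r i) + int (\<Sum>i=1..l. s i)"

lemma admissible_swap: "admissible k l r s u v d N \<Longrightarrow> admissible l k s r v u d N"
  by (auto simp: admissible_def tail_sums_nonzero_swap)

lemma admissible_Suc:
  assumes "admissible (Suc k) l r s u v d N" "0 \<le> d + int t1 - int (r 1)" "t1 \<le> N"
  shows "admissible k l (\<lambda>j. r (Suc j)) s (\<lambda>j. u (Suc j)) v (d + int t1 - int (r 1)) (N - t1)"
  using assms tail_sums_nonzero_Suc unfolding admissible_def int_sum_atLeast1_atMost_Suc by auto

lemma admissible_first_le:
  assumes "admissible (Suc k) l r s u v d N"
  shows "int (r 1) \<le> int N + d"
proof -
  have "0 \<le> int (\<Sum>i=1..k. r (Suc i)) + int (\<Sum>i=1..l. s i)"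
    by (rule add_nonneg_nonneg) (rule of_nat_0_le_iff)+
  then show ?thesis using assms unfolding admissible_def int_sum_atLeast1_atMost_Suc by linarith
qed

lemma admissible_Suc_Suc_le:
  assumes "admissible (Suc k) (Suc l) r s u v d N"
  shows "int (r 1) + int (s 1) \<le> int N + d"
proof -
  have "0 \<le> int (\<Sum>i=1..k. r (Suc i)) + int (\<Sum>i=1..l. s (Suc i))"
    by (rule add_nonneg_nonneg) (rule of_nat_0_le_iff)+
  then show ?thesis
    using assms unfolding admissible_def int_sum_atLeast1_atMost_Suc[where r = r]
      int_sum_atLeast1_atMost_Suc[where r = s] by linarith
qed

lemma shuffle_sum_fst_Suc_eq:
  fixes u v :: "nat \<Rightarrow> 'a::field"
  assumes IH: "\<And>r s (u :: nat \<Rightarrow> 'a) v d N. admissible k l r s u v d N \<Longrightarrow>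
      shuffle_sum k l r s u v d True N = lowered_product k l r s u v d"
    and adm: "admissible (Suc k) l r s u v d N"
  shows "shuffle_sum_fst (Suc k) l r s u v d \<sigma> N = (\<Sum>t1=1..N. of_nat (first_coeff \<sigma> d (r 1) t1) *
      (1 / ((\<Sum>j=1..Suc k. u j) + (\<Sum>j=1..l. v j)) ^ t1 *
       lowered_product k l (\<lambda>j. r (Suc j)) s (\<lambda>j. u (Suc j)) v (d + int t1 - int (r 1))))"
  unfolding shuffle_sum_fst_Suc
proof (rule sum.cong[OF refl], goal_cases)
  case (1 t1)
  show ?case
  proof (cases "0 \<le> d + int t1 - int (r 1)")
    case True
    then show ?thesis using IH[OF admissible_Suc[OF adm]] 1 by simp
  next
    case False
    then show ?thesis using first_coeff_eq_0[of d t1 "r 1" \<sigma>] adm 1 by (simp add: admissible_def)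
  qed
qed

lemma shuffle_sum_Suc_0:
  fixes u v :: "nat \<Rightarrow> 'a::field"
  assumes IH: "\<And>r s (u :: nat \<Rightarrow> 'a) v d N. admissible k 0 r s u v d N \<Longrightarrow>
      shuffle_sum k 0 r s u v d True N = lowered_product k 0 r s u v d"
    and adm: "admissible (Suc k) 0 r s u v d N"
  shows "shuffle_sum (Suc k) 0 r s u v d True N = lowered_product (Suc k) 0 r s u v d"
proof -
  let ?X = "\<Sum>j=1..Suc k. u j" and ?P = "mzf k (\<lambda>j. r (Suc j)) (\<lambda>j. u (Suc j))"
  have d: "0 \<le> d" using adm by (simp add: admissible_def)
  have "shuffle_sum (Suc k) 0 r s u v d True N = shuffle_sum_fst (Suc k) 0 r s u v d True N"
    using shuffle_sum_split[of "Suc k" 0 r s u v d True N] by (simp add: shuffle_sum_fst_0)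
  also have "\<dots> = (\<Sum>t1=1..N. if t1 = r 1 then (if d = 0 then ?P / ?X ^ t1 else 0) else 0)"
  proof (simp only: shuffle_sum_fst_Suc_eq[OF IH adm], rule sum.cong[OF refl], goal_cases)
    case (1 t1)
    consider "d + int t1 - int (r 1) \<noteq> 0" | "d = 0" "t1 = r 1" | "d + int t1 = int (r 1)" "t1 < r 1"
      using d by linarith
    then show ?case
      by cases (use 1 in \<open>auto simp: lowered_product_0 first_coeff_def binomial_eq_0\<close>)
  qed
  also have "\<dots> = lowered_product (Suc k) 0 r s u v d"
    using admissible_first_le[OF adm] adm mzf_Suc[of k r "\<lambda>j. r (Suc j)" u "\<lambda>j. u (Suc j)"]
    by (auto simp: lowered_product_0 admissible_def)
  finally show ?thesis .
qed

lemma shuffle_sum_0_Suc: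
  fixes u v :: "nat \<Rightarrow> 'a::field"
  assumes IH: "\<And>r s (u :: nat \<Rightarrow> 'a) v d N. admissible l 0 r s u v d N \<Longrightarrow>
      shuffle_sum l 0 r s u v d True N = lowered_product l 0 r s u v d"
    and adm: "admissible 0 (Suc l) r s u v d N"
  shows "shuffle_sum 0 (Suc l) r s u v d True N = lowered_product 0 (Suc l) r s u v d"
proof -
  let ?Y = "\<Sum>j=1..Suc l. v j" and ?P = "mzf l (\<lambda>j. s (Suc j)) (\<lambda>j. v (Suc j))"
  have "shuffle_sum 0 (Suc l) r s u v d True N = shuffle_sum_fst (Suc l) 0 s r v u d False N"
    using shuffle_sum_split[of 0 "Suc l" r s u v d True N] by (simp add: shuffle_sum_fst_0)
  also have "\<dots> = (\<Sum>t1=1..N. if t1 = nat (int (s 1) - d) \<and> d < int (s 1) then ?P / ?Y ^ t1 else 0)"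
  proof (simp only: shuffle_sum_fst_Suc_eq[OF IH admissible_swap[OF adm]],
      rule sum.cong[OF refl], goal_cases)
    case (1 t1)
    then show ?case by (auto simp: lowered_product_0 first_coeff_def ibinom_def)
  qed
  also have "\<dots> = lowered_product 0 (Suc l) r s u v d"
    using admissible_first_le[OF admissible_swap[OF adm]]
    by (auto simp: lowered_product_Suc mzf_0)
  finally show ?thesis .
qed

lemma shuffle_sum_fst_Suc_Suc_True:
  fixes u v :: "nat \<Rightarrow> 'a::field"
  assumes IH: "\<And>r s (u :: nat \<Rightarrow> 'a) v d N. admissible k (Suc l) r s u v d N \<Longrightarrow>
      shuffle_sum k (Suc l) r s u v d True N = lowered_product k (Suc l) r s u v d"
    and adm: "admissible (Suc k) (Suc l) r s u v d N"
  shows "shuffle_sum_fst (Suc k) (Suc l) r s u v d True N = (if d < int (s 1) then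
      mzf k (\<lambda>j. r (Suc j)) (\<lambda>j. u (Suc j)) * mzf l (\<lambda>j. s (Suc j)) (\<lambda>j. v (Suc j)) *
      partial_fraction_sum ((\<Sum>j=1..Suc k. u j) + (\<Sum>j=1..Suc l. v j)) (\<Sum>j=1..Suc l. v j) (r 1) (nat (int (s 1) - d))
    else 0)"
proof (cases "d < int (s 1)")
  case True
  define b where "b = nat (int (s 1) - d)"
  have b: "int b = int (s 1) - d" using True by (simp add: b_def)
  have "shuffle_sum_fst (Suc k) (Suc l) r s u v d True N =
      (\<Sum>t1=1..N. of_nat ((t1 - 1) choose (r 1 - 1)) * (1 / ((\<Sum>j=1..Suc k. u j) + (\<Sum>j=1..Suc l. v j)) ^ t1 *
        (if t1 < r 1 + b then mzf k (\<lambda>j. r (Suc j)) (\<lambda>j. u (Suc j)) * mzf l (\<lambda>j. s (Suc j)) (\<lambda>j. v (Suc j))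
           / (\<Sum>j=1..Suc l. v j) ^ (r 1 + b - t1) else 0)))"
  proof (simp only: shuffle_sum_fst_Suc_eq[OF IH adm], rule sum.cong[OF refl], goal_cases)
    case (1 t1)
    have "d + int t1 - int (r 1) < int (s 1) \<longleftrightarrow> t1 < r 1 + b"
      "t1 < r 1 + b \<Longrightarrow> nat (int (s 1) - (d + int t1 - int (r 1))) = r 1 + b - t1"
      using b by auto
    then show ?case by (simp add: first_coeff_def lowered_product_Suc)
  qed
  also have "\<dots> = mzf k (\<lambda>j. r (Suc j)) (\<lambda>j. u (Suc j)) * mzf l (\<lambda>j. s (Suc j)) (\<lambda>j. v (Suc j)) *
      partial_fraction_sum ((\<Sum>j=1..Suc k. u j) + (\<Sum>j=1..Suc l. v j)) (\<Sum>j=1..Suc l. v j) (r 1) b"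
    using admissible_Suc_Suc_le[OF adm] b by (intro sum_choose_partial_fraction) simp
  finally show ?thesis using True by (simp add: b_def)
next
  case False
  have "shuffle_sum_fst (Suc k) (Suc l) r s u v d True N = 0"
  proof (simp only: shuffle_sum_fst_Suc_eq[OF IH adm], rule sum.neutral, intro ballI, goal_cases)
    case (1 t1)
    then show ?case
      using False by (cases "t1 < r 1") (auto simp: first_coeff_def binomial_eq_0 lowered_product_Suc)
  qed
  then show ?thesis using False by simp
qed

lemma shuffle_sum_fst_Suc_Suc_False:
  fixes u v :: "nat \<Rightarrow> 'a::field"
  assumes IH: "\<And>r s (u :: nat \<Rightarrow> 'a) v d N. admissible k (Suc l) r s u v d N \<Longrightarrow>
      shuffle_sum k (Suc l) r s u v d True N = lowered_product k (Suc l) r s u v d"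
    and adm: "admissible (Suc k) (Suc l) r s u v d N"
  shows "shuffle_sum_fst (Suc k) (Suc l) r s u v d False N = (if d < int (r 1) then
      mzf k (\<lambda>j. r (Suc j)) (\<lambda>j. u (Suc j)) * mzf l (\<lambda>j. s (Suc j)) (\<lambda>j. v (Suc j)) *
      partial_fraction_sum ((\<Sum>j=1..Suc k. u j) + (\<Sum>j=1..Suc l. v j)) (\<Sum>j=1..Suc l. v j) (nat (int (r 1) - d)) (s 1)
    else 0)"
proof (cases "d < int (r 1)")
  case True
  define a where "a = nat (int (r 1) - d)"
  have a: "int a = int (r 1) - d" using True by (simp add: a_def)
  have "shuffle_sum_fst (Suc k) (Suc l) r s u v d False N =
      (\<Sum>t1=1..N. of_nat ((t1 - 1) choose (a - 1)) * (1 / ((\<Sum>j=1..Suc k. u j) + (\<Sum>j=1..Suc l. v j)) ^ t1 *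
        (if t1 < a + s 1 then mzf k (\<lambda>j. r (Suc j)) (\<lambda>j. u (Suc j)) * mzf l (\<lambda>j. s (Suc j)) (\<lambda>j. v (Suc j))
           / (\<Sum>j=1..Suc l. v j) ^ (a + s 1 - t1) else 0)))"
  proof (simp only: shuffle_sum_fst_Suc_eq[OF IH adm], rule sum.cong[OF refl], goal_cases)
    case (1 t1)
    have "d + int t1 - int (r 1) < int (s 1) \<longleftrightarrow> t1 < a + s 1"
      "t1 < a + s 1 \<Longrightarrow> nat (int (s 1) - (d + int t1 - int (r 1))) = a + s 1 - t1"
      using a by auto
    then show ?case using 1 True by (simp add: first_coeff_False lowered_product_Suc a_def)
  qed
  also have "\<dots> = mzf k (\<lambda>j. r (Suc j)) (\<lambda>j. u (Suc j)) * mzf l (\<lambda>j. s (Suc j)) (\<lambda>j. v (Suc j)) *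
      partial_fraction_sum ((\<Sum>j=1..Suc k. u j) + (\<Sum>j=1..Suc l. v j)) (\<Sum>j=1..Suc l. v j) a (s 1)"
    using admissible_Suc_Suc_le[OF adm] a by (intro sum_choose_partial_fraction) simp
  finally show ?thesis using True by (simp add: a_def)
next
  case False
  have "shuffle_sum_fst (Suc k) (Suc l) r s u v d False N = 0"
    by (simp only: shuffle_sum_fst_Suc_eq[OF IH adm], rule sum.neutral)
      (use False in \<open>simp add: first_coeff_False\<close>)
  then show ?thesis using False by simp
qed

lemma shuffle_sum_Suc_Suc:
  fixes u v :: "nat \<Rightarrow> 'a::field"
  assumes IH1: "\<And>r s (u :: nat \<Rightarrow> 'a) v d N. admissible k (Suc l) r s u v d N \<Longrightarrow>
      shuffle_sum k (Suc l) r s u v d True N = lowered_product k (Suc l) r s u v d"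
    and IH2: "\<And>r s (u :: nat \<Rightarrow> 'a) v d N. admissible l (Suc k) r s u v d N \<Longrightarrow>
      shuffle_sum l (Suc k) r s u v d True N = lowered_product l (Suc k) r s u v d"
    and adm: "admissible (Suc k) (Suc l) r s u v d N"
  shows "shuffle_sum (Suc k) (Suc l) r s u v d True N = lowered_product (Suc k) (Suc l) r s u v d"
proof (cases "d < int (s 1)")
  case True
  let ?X = "\<Sum>j=1..Suc k. u j" and ?Y = "\<Sum>j=1..Suc l. v j"
  let ?a = "r 1" and ?b = "nat (int (s 1) - d)"
  have nz: "tail_sums_nonzero (Suc k) (Suc l) u v" and a: "?a \<ge> 1"
    using adm by (auto simp: admissible_def)
  have "shuffle_sum (Suc k) (Suc l) r s u v d True N =
      mzf k (\<lambda>j. r (Suc j)) (\<lambda>j. u (Suc j)) * mzf l (\<lambda>j. s (Suc j)) (\<lambda>j. v (Suc j)) *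
      (partial_fraction_sum (?X + ?Y) ?Y ?a ?b + partial_fraction_sum (?X + ?Y) ?X ?b ?a)"
    using shuffle_sum_split[of "Suc k" "Suc l" r s u v d True N] True
      shuffle_sum_fst_Suc_Suc_True[OF IH1 adm] shuffle_sum_fst_Suc_Suc_False[OF IH2 admissible_swap[OF adm]]
    by (simp add: algebra_simps)
  also have "\<dots> = mzf k (\<lambda>j. r (Suc j)) (\<lambda>j. u (Suc j)) * mzf l (\<lambda>j. s (Suc j)) (\<lambda>j. v (Suc j)) *
      (1 / (?X ^ ?a * ?Y ^ ?b))"
    using True a tail_sums_nonzero_fst[OF nz] tail_sums_nonzero_fst[OF tail_sums_nonzero_swap[OF nz]]
      tail_sums_nonzero_total[OF nz] by (simp add: inverse_power_partial_fractions)
  also have "\<dots> = lowered_product (Suc k) (Suc l) r s u v d"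
    using True mzf_Suc[of k r "\<lambda>j. r (Suc j)" u "\<lambda>j. u (Suc j)"] by (simp add: lowered_product_Suc)
  finally show ?thesis .
next
  case False
  then show ?thesis
    using shuffle_sum_split[of "Suc k" "Suc l" r s u v d True N]
      shuffle_sum_fst_Suc_Suc_True[OF IH1 adm] shuffle_sum_fst_Suc_Suc_False[OF IH2 admissible_swap[OF adm]]
    by (simp add: lowered_product_Suc)
qed

lemma shuffle_sum_eq_lowered_product:
  fixes u v :: "nat \<Rightarrow> 'a::field"
  assumes "admissible k l r s u v d N"
  shows "shuffle_sum k l r s u v d True N = lowered_product k l r s u v d"
  using assms
proof (induction "k + l" arbitrary: k l r s u v d N rule: less_induct)
  case less
  consider "k = 0" "l = 0" | k' where "k = Suc k'" "l = 0" | l' where "k = 0" "l = Suc l'"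
    | k' l' where "k = Suc k'" "l = Suc l'"
    by (cases k; cases l) auto
  then show ?case
  proof cases
    case 1
    then have "N = 0" "d = 0" using less.prems by (auto simp: admissible_def)
    then show ?thesis using 1 by (simp add: shuffle_sum_0_0 lowered_product_0 mzf_0)
  next
    case (2 k')
    then show ?thesis using less by (auto intro: shuffle_sum_Suc_0)
  next
    case (3 l')
    then show ?thesis using less by (auto intro: shuffle_sum_0_Suc)
  next
    case (4 k' l')
    then show ?thesis using less by (auto intro: shuffle_sum_Suc_Suc)
  qed
qed

lemma shuffle_coeff_eq_ccoef:
  assumes p: "(\<phi>, \<psi>) \<in> shuffle_pairs k l" and i: "i \<in> {1..k+l}"
    and t: "t i \<ge> 1" and s: "\<forall>j\<in>{1..l}. s j \<ge> 1"
  shows "shuffle_coeff k l r s t \<phi> \<psi> 0 True i = ccoef k l r s t \<phi> \<psi> i"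
proof (cases "i = 1 \<and> 1 \<notin> \<phi> ` {1..k}")
  case False
  have "((if i = 1 then True else i - 1 \<in> \<phi> ` {1..k}) = (i \<in> \<phi> ` {1..k})) \<longleftrightarrow>
      i = 1 \<or> (i - 1 \<in> \<phi> ` {1..k} \<and> i \<in> \<phi> ` {1..k}) \<or> (i - 1 \<in> \<psi> ` {1..l} \<and> i \<in> \<psi> ` {1..l})"
  proof (cases "i = 1")
    case False
    then have "i - 1 \<in> \<psi> ` {1..l} \<longleftrightarrow> i - 1 \<notin> \<phi> ` {1..k}"
      using i by (intro shuffle_pairs_snd_image_iff[OF p]) auto
    then show ?thesis using shuffle_pairs_snd_image_iff[OF p i] False by auto
  qed (use False in simp)
  then show ?thesis unfolding shuffle_coeff_def ccoef_def Let_def by simp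
next
  case True
  then have i1: "i = 1" and "1 \<in> \<psi> ` {1..l}" using shuffle_pairs_snd_image_iff[OF p i] by auto
  then have \<psi>1: "\<psi> 1 = 1" and l: "1 \<in> {1..l}"
    using shuffle_pairs_fst_1[of \<psi> \<phi> l k] p by (auto simp: shuffle_pairs_swap)
  have "{j \<in> {1..l}. \<psi> j \<in> {1..1}} = {1}"
    using inj_onD[OF shuffle_pairs_inj(2)[OF p], of _ 1] \<psi>1 l by auto
  moreover have "{j \<in> {1..k}. \<phi> j \<in> {1..1}} = {}" using True by force
  moreover have "shuffle_vec k l \<phi> \<psi> r s 1 = s 1" using shuffle_vec_snd[OF p l] \<psi>1 by simp
  moreover have "ibinom (t 1 - 1) (int (t 1) - int (s 1)) = (t 1 - 1) choose (s 1 - 1)"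
    using ibinom_diff[of "t 1" "int (s 1)"] t s l i1 by simp
  ultimately show ?thesis using True unfolding shuffle_coeff_def ccoef_def Let_def i1 by simp
qed

theorem theorem3p2:
  fixes k l :: nat and r s :: "nat \<Rightarrow> nat" and u v :: "nat \<Rightarrow> 'a::field_char_0"
  assumes "k \<ge> 1" and "l \<ge> 1"
    and "\<forall>i\<in>{1..k}. r i \<ge> 1" and "\<forall>i\<in>{1..l}. s i \<ge> 1"
    and nz: "\<forall>a\<in>{1..k+1}. \<forall>b\<in>{1..l+1}. (a, b) \<noteq> (k+1, l+1) \<longrightarrow>
               (\<Sum>j=a..k. u j) + (\<Sum>j=b..l. v j) \<noteq> 0"
  shows "mzf k r u * mzf l s v =
    (\<Sum>(\<phi>, \<psi>)\<in>shuffle_pairs k l.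
       \<Sum>t\<in>{t \<in> {1..k+l} \<rightarrow>\<^sub>E UNIV. (\<forall>i\<in>{1..k+l}. t i \<ge> 1) \<and>
                 (\<Sum>i=1..k+l. t i) = (\<Sum>i=1..k. r i) + (\<Sum>i=1..l. s i)}.
         of_nat (\<Prod>i=1..k+l. ccoef k l r s t \<phi> \<psi> i) *
         mzf (k+l) t (shuffle_vec k l \<phi> \<psi> u v))"
proof -
  let ?N = "(\<Sum>i=1..k. r i) + (\<Sum>i=1..l. s i)"
  have "admissible k l r s u v 0 ?N"
    using assms by (simp add: admissible_def tail_sums_nonzero_def)
  then have "shuffle_sum k l r s u v 0 True ?N = lowered_product k l r s u v 0"
    by (rule shuffle_sum_eq_lowered_product)
  also have "lowered_product k l r s u v 0 = mzf k r u * mzf l s v"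
  proof -
    have "s 1 \<ge> 1" using assms(2,4) by simp
    then show ?thesis using assms(2) by (simp add: lowered_product_def)
  qed
  finally have "mzf k r u * mzf l s v = shuffle_sum k l r s u v 0 True ?N" ..
  also have "\<dots> = (\<Sum>(\<phi>, \<psi>)\<in>shuffle_pairs k l. \<Sum>t\<in>compositions (k+l) ?N.
      of_nat (\<Prod>i=1..k+l. ccoef k l r s t \<phi> \<psi> i) * mzf (k+l) t (shuffle_vec k l \<phi> \<psi> u v))"
    unfolding shuffle_sum_def shuffle_term_def split_beta
    using shuffle_coeff_eq_ccoef assms(4) by (auto simp: compositions_def intro!: sum.cong prod.cong)
  finally show ?thesis unfolding compositions_def .
qed

end
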